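(* For every $n\ge0$ there is a bijection $\varphi:\mathcal S_n\to\mathfrak S_{n+1}(1243,2143)$ such that $\tau_k(\varphi(\pi))=\tau_k(\pi)$ for all $k\ge1$ and all $\pi\in\mathcal S_n$. Consequently, for each $k\ge2$, $\varphi$ restricts to a bijection between the Schröder paths in $\mathcal S_n$ that do not cross the line $y-x=k-2$ and $\mathfrak S_{n+1}(1243,2143,12\ldots k)$.
   Context: $\mathcal S_n$ is the set of Schröder paths: lattice paths from $(0,0)$ to $(n,n)$ using east $(1,0)$, north $(0,1)$ and diagonal $(1,1)$ steps that never go below $y=x$. For an east or diagonal step $s$ whose left-most point is $(a,c)$, its height is $ht(s)=c-a$. For a Schröder path $\pi$ and $k\ge1$, $\tau_k(\pi)=\binom{0}{k-1}+\sum_s\binom{ht(s)}{k-1}$, the sum over all east and diagonal steps $s$ of $\pi$ (with $\binom{i}{j}=0$ if $j<0$ or $i<j$). For a permutation $\pi$, $\tau_k(\pi)$ is the number of increasing subsequences of length $k$. $\mathfrak S_m(R)$ is the set of permutations of $\{1,\dots,m\}$ avoiding every pattern in $R$ (no subsequence with the same relative order as a pattern). *)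

theory Defs
  imports Main "HOL-Library.Sublist"
begin

datatype step = East | North | Diag

fun step_end :: "int \<times> int \<Rightarrow> step \<Rightarrow> int \<times> int" where
  "step_end (a, c) East = (a + 1, c)"
| "step_end (a, c) North = (a, c + 1)"
| "step_end (a, c) Diag = (a + 1, c + 1)"

fun walk :: "int \<times> int \<Rightarrow> step list \<Rightarrow> (int \<times> int) list" where
  "walk p [] = [p]"
| "walk p (s # ss) = p # walk (step_end p s) ss"

fun heights :: "int \<times> int \<Rightarrow> step list \<Rightarrow> int list" where
  "heights p [] = []"
| "heights (a, c) (s # ss) =
     (if s = North then [] else [c - a]) @ heights (step_end (a, c) s) ss"

definition schroeder :: "nat \<Rightarrow> step list set" where
  "schroeder n = {ss. last (walk (0, 0) ss) = (int n, int n)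
                      \<and> (\<forall>(a, c) \<in> set (walk (0, 0) ss). a \<le> c)}"

definition tau_path :: "nat \<Rightarrow> step list \<Rightarrow> nat" where
  "tau_path k ss = (0 choose (k - 1))
      + sum_list (map (\<lambda>h. nat h choose (k - 1)) (heights (0, 0) ss))"

definition no_cross :: "int \<Rightarrow> step list \<Rightarrow> bool" where
  "no_cross d ss = (\<forall>(a, c) \<in> set (walk (0, 0) ss). c - a \<le> d)"

definition perms :: "nat \<Rightarrow> nat list set" where
  "perms m = {xs. distinct xs \<and> set xs = {1..m}}"

definition order_iso :: "nat list \<Rightarrow> nat list \<Rightarrow> bool" where
  "order_iso ys p = (length ys = length p \<and>
     (\<forall>i < length p. \<forall>j < length p. (ys ! i < ys ! j) = (p ! i < p ! j)))"

definition contains :: "nat list \<Rightarrow> nat list \<Rightarrow> bool" where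
  "contains xs p = (\<exists>ys. subseq ys xs \<and> order_iso ys p)"

definition avoiders :: "nat \<Rightarrow> nat list set \<Rightarrow> nat list set" where
  "avoiders m R = {xs \<in> perms m. \<forall>p \<in> R. \<not> contains xs p}"

definition tau_perm :: "nat \<Rightarrow> nat list \<Rightarrow> nat" where
  "tau_perm k xs = card {I. I \<subseteq> {..<length xs} \<and> card I = k \<and>
       (\<forall>i \<in> I. \<forall>j \<in> I. i < j \<longrightarrow> xs ! i < xs ! j)}"

end

theory Submission
  imports Defs
begin

text \<open>Both families are generated by trees with the rewriting rule
  \<open>(l) \<leadsto> (0) (1) \<dots> (l) (1) (2) \<dots> (l + 1)\<close>. A Schroeder path is labelled by its final
  run of east steps, and its children insert a diagonal step, or a north step followed by an
  east step, into that run. A permutation is labelled via its first two entries, and its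
  children insert a new entry at position 0 or 1 so that the larger entries to its right
  increase. In both trees a child with label \<open>i\<close> exceeds its parent in \<open>tau_k\<close> by exactly
  \<open>i choose (k - 1)\<close>: on the path side the new step has height \<open>i\<close>, on the permutation side
  the new entry is comparable with exactly \<open>i\<close> entries, and these form an increasing chain.
  So the isomorphism of the two trees preserves every \<open>tau_k\<close>, and since both "no crossing
  of \<open>y - x = k - 2\<close>" and "avoiding \<open>12\<dots>k\<close>" mean \<open>tau_k = 0\<close>, it restricts as claimed.\<close>

section \<open>Generating trees\<close>

locale generating_tree =
  fixes level :: "nat \<Rightarrow> 'a set"
    and label :: "'a \<Rightarrow> 'l"
    and choices :: "'l \<Rightarrow> 'c set"
    and relabel :: "'l \<Rightarrow> 'c \<Rightarrow> 'l"
    and child :: "'a \<Rightarrow> 'c \<Rightarrow> 'a"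
  assumes bij_child:
      "bij_betw (case_prod child) (SIGMA a:level n. choices (label a)) (level (Suc n))"
    and label_child:
      "a \<in> level n \<Longrightarrow> c \<in> choices (label a) \<Longrightarrow> label (child a c) = relabel (label a) c"

lemma bij_betw_map_prod_Sigma:
  assumes "bij_betw f A B" "\<And>a. a \<in> A \<Longrightarrow> D (f a) = C a"
  shows "bij_betw (map_prod f id) (SIGMA a:A. C a) (SIGMA b:B. D b)"
  using assms unfolding bij_betw_def inj_on_def by (force simp: map_prod_def)

lemma generating_tree_iso_step:
  assumes A: "generating_tree A labA choices relabel childA"
    and B: "generating_tree B labB choices relabel childB"
    and \<phi>: "bij_betw \<phi> (A n) (B n)" and lab: "\<And>a. a \<in> A n \<Longrightarrow> labB (\<phi> a) = labA a"
  obtains \<psi> where "bij_betw \<psi> (A (Suc n)) (B (Suc n))"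
    "\<And>a c. a \<in> A n \<Longrightarrow> c \<in> choices (labA a) \<Longrightarrow> \<psi> (childA a c) = childB (\<phi> a) c"
proof
  let ?SA = "SIGMA a:A n. choices (labA a)"
  let ?\<psi> = "case_prod childB \<circ> (map_prod \<phi> id \<circ> the_inv_into ?SA (case_prod childA))"
  have bijA: "bij_betw (case_prod childA) ?SA (A (Suc n))"
    using A by (rule generating_tree.bij_child)
  have bijB: "bij_betw (case_prod childB) (SIGMA b:B n. choices (labB b)) (B (Suc n))"
    using B by (rule generating_tree.bij_child)
  have "bij_betw (map_prod \<phi> id) ?SA (SIGMA b:B n. choices (labB b))"
    using \<phi> lab by (intro bij_betw_map_prod_Sigma) auto
  then show "bij_betw ?\<psi> (A (Suc n)) (B (Suc n))"
    by (intro bij_betw_trans[OF bij_betw_trans[OF bij_betw_the_inv_into[OF bijA]] bijB])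
  fix a c assume "a \<in> A n" "c \<in> choices (labA a)"
  then have "the_inv_into ?SA (case_prod childA) (childA a c) = (a, c)"
    using bijA unfolding bij_betw_def by (metis SigmaI case_prod_conv the_inv_into_f_f)
  then show "?\<psi> (childA a c) = childB (\<phi> a) c" by simp
qed

theorem generating_tree_iso:
  assumes A: "generating_tree A labA choices relabel childA"
    and B: "generating_tree B labB choices relabel childB"
    and roots: "A 0 = {a0}" "B 0 = {b0}" "labA a0 = labB b0"
    and R_root: "R a0 b0"
    and R_child: "\<And>n a b c. a \<in> A n \<Longrightarrow> b \<in> B n \<Longrightarrow> labA a = labB b \<Longrightarrow>
                    c \<in> choices (labA a) \<Longrightarrow> R a b \<Longrightarrow> R (childA a c) (childB b c)"
  shows "\<exists>\<phi>. bij_betw \<phi> (A n) (B n) \<and> (\<forall>a\<in>A n. R a (\<phi> a))"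
proof -
  have "\<exists>\<phi>. bij_betw \<phi> (A n) (B n) \<and> (\<forall>a\<in>A n. labB (\<phi> a) = labA a \<and> R a (\<phi> a))"
  proof (induction n)
    case 0
    show ?case using roots R_root by (intro exI[of _ "\<lambda>_. b0"]) (auto simp: bij_betw_def)
  next
    case (Suc n)
    then obtain \<phi> where \<phi>: "bij_betw \<phi> (A n) (B n)"
      and inv: "\<And>a. a \<in> A n \<Longrightarrow> labB (\<phi> a) = labA a \<and> R a (\<phi> a)" by blast
    obtain \<psi> where \<psi>: "bij_betw \<psi> (A (Suc n)) (B (Suc n))"
      and \<psi>_child: "\<And>a c. a \<in> A n \<Longrightarrow> c \<in> choices (labA a) \<Longrightarrow> \<psi> (childA a c) = childB (\<phi> a) c"
      using generating_tree_iso_step[OF A B \<phi>] inv by blast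
    have "labB (\<psi> t) = labA t \<and> R t (\<psi> t)" if t_in: "t \<in> A (Suc n)" for t
    proof -
      obtain a c where ac: "a \<in> A n" "c \<in> choices (labA a)" and t: "t = childA a c"
        using t_in generating_tree.bij_child[OF A, of n] unfolding bij_betw_def by fast
      have "\<phi> a \<in> B n" using \<phi> ac(1) by (rule bij_betw_apply)
      then show ?thesis
        using inv[OF ac(1)] R_child[OF ac(1) _ _ ac(2)] \<psi>_child[OF ac] ac(2)
          generating_tree.label_child[OF A ac] generating_tree.label_child[OF B, of "\<phi> a" n c]
        by (simp add: t)
    qed
    with \<psi> show ?case by blast
  qed
  then show ?thesis by blast
qed

section \<open>Pattern containment and increasing subsequences\<close>

lemma subseq_indices:
  assumes "subseq ys xs"
  shows "\<exists>ix. sorted_wrt (<) ix \<and> (\<forall>i\<in>set ix. i < length xs) \<and> ys = map ((!) xs) ix"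
  using assms
proof (induction rule: list_emb.induct)
  case (list_emb_Nil ys)
  then show ?case by (intro exI[of _ "[]"]) auto
next
  case (list_emb_Cons xs ys y)
  then obtain ix where "sorted_wrt (<) ix" "\<forall>i\<in>set ix. i < length ys" "xs = map ((!) ys) ix"
    by blast
  then show ?case by (intro exI[of _ "map Suc ix"]) (auto simp: sorted_wrt_map)
next
  case (list_emb_Cons2 x y xs ys)
  then obtain ix where "sorted_wrt (<) ix" "\<forall>i\<in>set ix. i < length ys" "xs = map ((!) ys) ix"
    by blast
  then show ?case using list_emb_Cons2.hyps
    by (intro exI[of _ "0 # map Suc ix"]) (auto simp: sorted_wrt_map)
qed

lemma subseq_map_nth:
  assumes "sorted_wrt (<) ix" "\<forall>i\<in>set ix. i < length xs"
  shows "subseq (map ((!) xs) ix) xs"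
  using assms
proof (induction xs arbitrary: ix)
  case Nil
  then show ?case by (cases ix) auto
next
  case (Cons x xs)
  note prems = Cons.prems
  have IH: "subseq (map ((!) (x # xs)) js) xs"
    if "sorted_wrt (<) js" "\<forall>j\<in>set js. 0 < j \<and> j < length (x # xs)" for js
  proof -
    have "subseq (map ((!) xs) (map (\<lambda>j. j - 1) js)) xs"
      using that by (intro Cons.IH) (auto simp: sorted_wrt_map elim!: sorted_wrt_mono_rel[rotated])
    moreover have "map ((!) (x # xs)) js = map ((!) xs) (map (\<lambda>j. j - 1) js)"
      using that(2) by (auto simp: nth_Cons')
    ultimately show ?thesis by metis
  qed
  show ?case
  proof (cases ix)
    case Nil
    then show ?thesis by simp
  next
    case (Cons i ix')
    show ?thesis
    proof (cases "i = 0")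
      case True
      then have "subseq (map ((!) (x # xs)) ix') xs" using prems Cons by (intro IH) auto
      then show ?thesis using Cons True by (auto intro: list_emb_Cons2)
    next
      case False
      then have "subseq (map ((!) (x # xs)) ix) xs" using prems Cons by (intro IH) auto
      then show ?thesis by (rule list_emb_Cons)
    qed
  qed
qed

lemma subseq_iff_indices:
  "subseq ys xs \<longleftrightarrow>
     (\<exists>ix. sorted_wrt (<) ix \<and> (\<forall>i\<in>set ix. i < length xs) \<and> ys = map ((!) xs) ix)"
  using subseq_indices subseq_map_nth by blast

lemma contains_pattern4:
  "contains xs [p0, p1, p2, p3] \<longleftrightarrow> (\<exists>a b c d. a < b \<and> b < c \<and> c < d \<and> d < length xs \<and>
      order_iso [xs ! a, xs ! b, xs ! c, xs ! d] [p0, p1, p2, p3])"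
  unfolding contains_def subseq_iff_indices
proof safe
  fix ix assume ix: "sorted_wrt (<) ix" "\<forall>i\<in>set ix. i < length xs"
    and iso: "order_iso (map ((!) xs) ix) [p0, p1, p2, p3]"
  from iso obtain a b c d where "ix = [a, b, c, d]"
    by (auto simp: order_iso_def length_Suc_conv numeral_eq_Suc)
  with ix iso show "\<exists>a b c d. a < b \<and> b < c \<and> c < d \<and> d < length xs \<and>
      order_iso [xs ! a, xs ! b, xs ! c, xs ! d] [p0, p1, p2, p3]" by auto
next
  fix a b c d assume "a < b" "b < c" "c < d" "d < length xs"
    "order_iso [xs ! a, xs ! b, xs ! c, xs ! d] [p0, p1, p2, p3]"
  then show "\<exists>ys. (\<exists>ix. sorted_wrt (<) ix \<and> (\<forall>i\<in>set ix. i < length xs) \<and> ys = map ((!) xs) ix)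
      \<and> order_iso ys [p0, p1, p2, p3]"
    by (intro exI[of _ "[xs ! a, xs ! b, xs ! c, xs ! d]"] conjI exI[of _ "[a, b, c, d]"]) auto
qed

lemma order_iso_1243: "order_iso [w, x, y, z] [1, 2, 4, 3] \<longleftrightarrow> w < x \<and> x < z \<and> z < y"
  unfolding order_iso_def by (simp add: All_less_Suc numeral_eq_Suc) linarith

lemma order_iso_2143: "order_iso [w, x, y, z] [2, 1, 4, 3] \<longleftrightarrow> x < w \<and> w < z \<and> z < y"
  unfolding order_iso_def by (simp add: All_less_Suc numeral_eq_Suc) linarith

text \<open>An occurrence of 1243 or 2143, with the order of the two smallest entries forgotten.\<close>
definition avoids_1243_2143 :: "nat list \<Rightarrow> bool" where
  "avoids_1243_2143 t \<longleftrightarrow> \<not> (\<exists>a b c d. a < b \<and> b < c \<and> c < d \<and> d < length t \<and>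
      t ! a < t ! d \<and> t ! b < t ! d \<and> t ! d < t ! c)"

lemma avoids_1243_2143_iff:
  assumes "distinct t"
  shows "avoids_1243_2143 t \<longleftrightarrow> \<not> contains t [1, 2, 4, 3] \<and> \<not> contains t [2, 1, 4, 3]"
proof -
  have neq: "t ! a \<noteq> t ! b" if "a < b" "b < length t" for a b
    using assms that nth_eq_iff_index_eq by fastforce
  have "t ! a < t ! d \<and> t ! b < t ! d \<longleftrightarrow>
      (t ! a < t ! b \<and> t ! b < t ! d) \<or> (t ! b < t ! a \<and> t ! a < t ! d)"
    if "a < b" "b < length t" for a b d :: nat
    using neq[OF that] by auto
  then show ?thesis
    unfolding avoids_1243_2143_def contains_pattern4 order_iso_1243 order_iso_2143
    by (smt (verit) less_trans)
qed

lemma avoiders_1243_2143: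
  "avoiders m {[1, 2, 4, 3], [2, 1, 4, 3]} = {t \<in> perms m. avoids_1243_2143 t}"
  unfolding avoiders_def perms_def using avoids_1243_2143_iff by auto

definition incr_sets :: "nat \<Rightarrow> nat list \<Rightarrow> nat set set" where
  "incr_sets k xs = {I. I \<subseteq> {..<length xs} \<and> card I = k \<and>
      (\<forall>i\<in>I. \<forall>j\<in>I. i < j \<longrightarrow> xs ! i < xs ! j)}"

lemma tau_perm_eq_card: "tau_perm k xs = card (incr_sets k xs)"
  unfolding tau_perm_def incr_sets_def ..

lemma finite_incr_sets: "finite (incr_sets k xs)"
  by (rule finite_subset[of _ "Pow {..<length xs}"]) (auto simp: incr_sets_def)

lemma order_iso_increasing: "order_iso ys [1..<k+1] \<longleftrightarrow> length ys = k \<and> sorted_wrt (<) ys"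
  unfolding order_iso_def sorted_wrt_iff_nth_less
  by (auto simp del: upt_Suc) (metis linorder_neqE_nat not_less_iff_gr_or_eq)

lemma incr_sets_neq_empty_iff:
  "incr_sets k xs \<noteq> {} \<longleftrightarrow> (\<exists>ix. sorted_wrt (<) ix \<and> (\<forall>i\<in>set ix. i < length xs) \<and>
      length ix = k \<and> sorted_wrt (\<lambda>i j. xs ! i < xs ! j) ix)"
proof
  assume "incr_sets k xs \<noteq> {}"
  then obtain I where I: "I \<subseteq> {..<length xs}" "card I = k"
    "\<forall>i\<in>I. \<forall>j\<in>I. i < j \<longrightarrow> xs ! i < xs ! j" by (auto simp: incr_sets_def)
  have "finite I" using I(1) finite_subset by blast
  with I show "\<exists>ix. sorted_wrt (<) ix \<and> (\<forall>i\<in>set ix. i < length xs) \<and>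
      length ix = k \<and> sorted_wrt (\<lambda>i j. xs ! i < xs ! j) ix"
    by (intro exI[of _ "sorted_list_of_set I"])
      (auto intro: sorted_wrt_mono_rel[OF _ strict_sorted_list_of_set])
next
  assume "\<exists>ix. sorted_wrt (<) ix \<and> (\<forall>i\<in>set ix. i < length xs) \<and>
      length ix = k \<and> sorted_wrt (\<lambda>i j. xs ! i < xs ! j) ix"
  then obtain ix where ix: "sorted_wrt (<) ix" "\<forall>i\<in>set ix. i < length xs" "length ix = k"
    "sorted_wrt (\<lambda>i j. xs ! i < xs ! j) ix" by blast
  have "xs ! i < xs ! j" if ij: "i \<in> set ix" "j \<in> set ix" "i < j" for i j
  proof -
    obtain a b where ab: "a < k" "b < k" "ix ! a = i" "ix ! b = j"
      using ij(1,2) ix(3) by (auto simp: in_set_conv_nth)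
    then have "a < b"
      using ix(1,3) ij(3) by (metis linorder_neqE_nat order_less_asym sorted_wrt_nth_less)
    then show ?thesis using ix(3,4) ab by (metis sorted_wrt_nth_less)
  qed
  moreover have "card (set ix) = k"
    using ix(1,3) by (simp add: distinct_card strict_sorted_iff)
  ultimately have "set ix \<in> incr_sets k xs" using ix(2) by (auto simp: incr_sets_def subset_iff)
  then show "incr_sets k xs \<noteq> {}" by blast
qed

lemma contains_increasing_iff: "contains xs [1..<k+1] \<longleftrightarrow> tau_perm k xs \<noteq> 0"
proof -
  have "contains xs [1..<k+1] \<longleftrightarrow> incr_sets k xs \<noteq> {}"
    unfolding contains_def subseq_iff_indices order_iso_increasing incr_sets_neq_empty_iff
    by (auto simp: sorted_wrt_map)
  then show ?thesis by (simp add: tau_perm_eq_card finite_incr_sets)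
qed

lemma tau_perm_map:
  assumes "\<And>a b. a \<in> set xs \<Longrightarrow> b \<in> set xs \<Longrightarrow> g a < g b \<longleftrightarrow> a < b"
  shows "tau_perm k (map g xs) = tau_perm k xs"
proof -
  have "incr_sets k (map g xs) = incr_sets k xs"
    unfolding incr_sets_def using assms by (fastforce simp: subset_iff)
  then show ?thesis by (simp add: tau_perm_eq_card)
qed

definition del_nth :: "nat \<Rightarrow> 'a list \<Rightarrow> 'a list" where
  "del_nth p xs = take p xs @ drop (Suc p) xs"

definition skip_index :: "nat \<Rightarrow> nat \<Rightarrow> nat" where
  "skip_index p j = (if j < p then j else Suc j)"

lemma length_del_nth: "p < length xs \<Longrightarrow> length (del_nth p xs) = length xs - 1"
  by (simp add: del_nth_def)

lemma nth_del_nth: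
  "p < length xs \<Longrightarrow> j < length xs - 1 \<Longrightarrow> del_nth p xs ! j = xs ! skip_index p j"
  by (auto simp: del_nth_def skip_index_def nth_append min_def)

lemma skip_index_less_iff [simp]: "skip_index p i < skip_index p j \<longleftrightarrow> i < j"
  by (auto simp: skip_index_def)

lemma skip_index_neq [simp]: "skip_index p j \<noteq> p"
  by (auto simp: skip_index_def)

lemma inj_skip_index: "inj (skip_index p)"
  by (auto simp: inj_on_def skip_index_def split: if_splits)

lemma bij_betw_skip_index: "p < L \<Longrightarrow> bij_betw (skip_index p) {..<L - 1} ({..<L} - {p})"
  by (rule bij_betw_byWitness[where f' = "\<lambda>i. if i < p then i else i - 1"])
    (auto simp: skip_index_def)

lemma card_incr_sets_avoiding:
  assumes p: "p < length xs"
  shows "card {I \<in> incr_sets k xs. p \<notin> I} = tau_perm k (del_nth p xs)"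
proof -
  let ?L = "length xs" and ?g = "skip_index p"
  have bij: "bij_betw (image ?g) (Pow {..<?L - 1}) (Pow ({..<?L} - {p}))"
    using bij_betw_skip_index[OF p] by (rule bij_betw_Pow)
  have incr: "?g ` J \<in> incr_sets k xs \<longleftrightarrow> J \<in> incr_sets k (del_nth p xs)"
    if J: "J \<in> Pow {..<?L - 1}" for J
  proof -
    have "card (?g ` J) = card J" using inj_skip_index by (rule card_image[OF inj_on_subset]) simp
    moreover have "?g ` J \<subseteq> {..<?L}" using J p by (auto simp: skip_index_def)
    moreover have "(\<forall>i\<in>?g ` J. \<forall>j\<in>?g ` J. i < j \<longrightarrow> xs ! i < xs ! j) \<longleftrightarrow>
        (\<forall>i\<in>J. \<forall>j\<in>J. i < j \<longrightarrow> del_nth p xs ! i < del_nth p xs ! j)"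
      using J p by (auto simp: nth_del_nth subset_iff)
    ultimately show ?thesis using J p by (auto simp: incr_sets_def length_del_nth)
  qed
  have "{J \<in> Pow {..<?L - 1}. J \<in> incr_sets k (del_nth p xs)} = incr_sets k (del_nth p xs)"
    using p by (auto simp: incr_sets_def length_del_nth)
  moreover have "{I \<in> Pow ({..<?L} - {p}). I \<in> incr_sets k xs} = {I \<in> incr_sets k xs. p \<notin> I}"
    by (auto simp: incr_sets_def)
  ultimately have "bij_betw (image ?g) (incr_sets k (del_nth p xs)) {I \<in> incr_sets k xs. p \<notin> I}"
    using bij_betw_Collect[OF bij, where P = "\<lambda>J. J \<in> incr_sets k (del_nth p xs)"
        and Q = "\<lambda>I. I \<in> incr_sets k xs"] incr by simp
  then show ?thesis unfolding tau_perm_eq_card by (metis bij_betw_same_card)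
qed

lemma card_incr_sets_through:
  assumes p: "p < length xs" and k: "k \<ge> 1"
    and C: "C = {j. j < length xs \<and> (j < p \<and> xs ! j < xs ! p \<or> p < j \<and> xs ! p < xs ! j)}"
    and chain: "\<forall>i\<in>C. \<forall>j\<in>C. i < j \<longrightarrow> xs ! i < xs ! j"
  shows "card {I \<in> incr_sets k xs. p \<in> I} = card C choose (k - 1)"
proof -
  have fin: "finite C" using C by simp
  have "insert p J \<in> incr_sets k xs" if J: "J \<subseteq> C" "card J = k - 1" for J
  proof -
    have "p \<notin> J" "finite J" using J fin C by (auto intro: finite_subset)
    then have "card (insert p J) = k" using J(2) k by simp
    moreover have "xs ! i < xs ! j" if ij: "i \<in> insert p J" "j \<in> insert p J" "i < j" for i j
    proof -
      consider "i = p" "j \<in> C" | "j = p" "i \<in> C" | "i \<in> C" "j \<in> C"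
        using ij J(1) by blast
      then show ?thesis using chain ij(3) by cases (auto simp: C)
    qed
    ultimately show ?thesis using J(1) p by (auto simp: incr_sets_def C)
  qed
  moreover have "I - {p} \<subseteq> C" "card (I - {p}) = k - 1"
    if I: "I \<in> incr_sets k xs" "p \<in> I" for I
  proof -
    have sub: "I \<subseteq> {..<length xs}" and "card I = k"
      and inc: "\<forall>i\<in>I. \<forall>j\<in>I. i < j \<longrightarrow> xs ! i < xs ! j"
      using I(1) by (auto simp: incr_sets_def)
    then show "card (I - {p}) = k - 1" using I(2) finite_subset[OF sub] by simp
    show "I - {p} \<subseteq> C"
    proof
      fix j assume j: "j \<in> I - {p}"
      then have "j < p \<or> p < j" by auto
      then show "j \<in> C" using j sub inc I(2) by (auto simp: C)
    qed
  qed
  moreover have "p \<notin> C" by (simp add: C)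
  ultimately have "bij_betw (insert p) {J. J \<subseteq> C \<and> card J = k - 1} {I \<in> incr_sets k xs. p \<in> I}"
    by (intro bij_betw_byWitness[where f' = "\<lambda>I. I - {p}"]) (auto simp: subset_iff)
  then show ?thesis by (simp add: bij_betw_same_card[symmetric] n_subsets fin)
qed

lemma tau_perm_del_nth:
  assumes "p < length xs" "k \<ge> 1"
    and "C = {j. j < length xs \<and> (j < p \<and> xs ! j < xs ! p \<or> p < j \<and> xs ! p < xs ! j)}"
    and "\<forall>i\<in>C. \<forall>j\<in>C. i < j \<longrightarrow> xs ! i < xs ! j"
  shows "tau_perm k xs = tau_perm k (del_nth p xs) + (card C choose (k - 1))"
proof -
  have "tau_perm k xs = card {I \<in> incr_sets k xs. p \<notin> I} + card {I \<in> incr_sets k xs. p \<in> I}"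
    unfolding tau_perm_eq_card
    by (subst card_Un_disjoint[symmetric])
      (auto intro: arg_cong[where f = card] simp: finite_incr_sets)
  also have "\<dots> = tau_perm k (del_nth p xs) + (card C choose (k - 1))"
    using card_incr_sets_avoiding[OF assms(1)] card_incr_sets_through[OF assms] by (rule arg_cong2)
  finally show ?thesis .
qed

section \<open>Inserting and removing entries\<close>

definition shift_from :: "nat \<Rightarrow> nat \<Rightarrow> nat" where
  "shift_from q v = (if q \<le> v then Suc v else v)"

definition unshift_from :: "nat \<Rightarrow> nat \<Rightarrow> nat" where
  "unshift_from q v = (if q < v then v - 1 else v)"

definition insert_entry :: "nat \<Rightarrow> nat \<Rightarrow> nat list \<Rightarrow> nat list" where
  "insert_entry p q s = take p (map (shift_from q) s) @ q # drop p (map (shift_from q) s)"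

definition remove_entry :: "nat \<Rightarrow> nat list \<Rightarrow> nat list" where
  "remove_entry p t = map (unshift_from (t ! p)) (del_nth p t)"

lemma shift_from_less_iff [simp]: "shift_from q a < shift_from q b \<longleftrightarrow> a < b"
  by (auto simp: shift_from_def)

lemma shift_from_neq [simp]: "shift_from q v \<noteq> q"
  by (auto simp: shift_from_def)

lemma less_shift_from_iff [simp]: "q < shift_from q v \<longleftrightarrow> q \<le> v"
  by (auto simp: shift_from_def)

lemma shift_from_below [simp]: "v < q \<Longrightarrow> shift_from q v = v"
  by (auto simp: shift_from_def)

lemma unshift_shift_from [simp]: "unshift_from q (shift_from q v) = v"
  by (auto simp: shift_from_def unshift_from_def)

lemma shift_unshift_from [simp]: "v \<noteq> q \<Longrightarrow> shift_from q (unshift_from q v) = v"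
  by (auto simp: shift_from_def unshift_from_def)

lemma unshift_from_less_iff:
  "a \<noteq> q \<Longrightarrow> b \<noteq> q \<Longrightarrow> unshift_from q a < unshift_from q b \<longleftrightarrow> a < b"
  by (auto simp: unshift_from_def)

lemma inj_shift_from: "inj (shift_from q)"
  by (auto simp: inj_on_def shift_from_def split: if_splits)

lemma bij_betw_shift_from:
  "1 \<le> q \<Longrightarrow> q \<le> Suc m \<Longrightarrow> bij_betw (shift_from q) {1..m} ({1..Suc m} - {q})"
  by (rule bij_betw_byWitness[where f' = "unshift_from q"])
    (auto simp: shift_from_def unshift_from_def)

lemma set_take_Un_drop: "set (take p xs) \<union> set (drop p xs) = set xs"
  by (metis append_take_drop_id set_append)

lemma set_insert_at: "set (take p xs @ q # drop p xs) = insert q (set xs)"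
  using set_take_Un_drop[of p xs] by auto

lemma distinct_middle: "distinct (ys @ q # zs) \<longleftrightarrow> distinct (q # ys @ zs)"
  by auto

lemma distinct_insert_at: "distinct (take p xs @ q # drop p xs) \<longleftrightarrow> distinct (q # xs)"
  by (metis append_take_drop_id distinct_middle)

lemma set_insert_entry: "set (insert_entry p q s) = insert q (shift_from q ` set s)"
  unfolding insert_entry_def set_insert_at by simp

lemma distinct_insert_entry:
  "distinct (insert_entry p q s) \<longleftrightarrow> distinct (q # map (shift_from q) s)"
  unfolding insert_entry_def distinct_insert_at ..

lemma bij_betw_unshift_from:
  "x \<in> {1..Suc m} \<Longrightarrow> bij_betw (unshift_from x) ({1..Suc m} - {x}) {1..m}"
  by (rule bij_betw_byWitness[where f' = "shift_from x"])
    (auto simp: shift_from_def unshift_from_def)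

lemma length_insert_entry [simp]: "length (insert_entry p q s) = Suc (length s)"
  by (simp add: insert_entry_def)

lemma nth_insert_entry:
  assumes "p \<le> length s" "j \<le> length s"
  shows "insert_entry p q s ! j =
    (if j < p then shift_from q (s ! j) else if j = p then q else shift_from q (s ! (j - 1)))"
  using assms by (auto simp: insert_entry_def nth_append nth_Cons' min_def)

lemma del_nth_insert_entry:
  "p \<le> length s \<Longrightarrow> del_nth p (insert_entry p q s) = map (shift_from q) s"
  by (simp add: insert_entry_def del_nth_def)

lemma remove_insert_entry: "p \<le> length s \<Longrightarrow> remove_entry p (insert_entry p q s) = s"
  by (simp add: remove_entry_def del_nth_insert_entry nth_insert_entry comp_def)

lemma length_remove_entry: "p < length t \<Longrightarrow> length (remove_entry p t) = length t - 1"
  by (simp add: remove_entry_def length_del_nth)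

lemma nth_remove_entry:
  "p < length t \<Longrightarrow> j < length t - 1 \<Longrightarrow>
    remove_entry p t ! j = unshift_from (t ! p) (t ! skip_index p j)"
  by (simp add: remove_entry_def nth_del_nth length_del_nth)

lemma insert_remove_entry:
  assumes "distinct t" "p < length t"
  shows "insert_entry p (t ! p) (remove_entry p t) = t"
proof (rule nth_equalityI)
  show "length (insert_entry p (t ! p) (remove_entry p t)) = length t"
    using assms(2) by (simp add: length_remove_entry)
  fix j assume "j < length (insert_entry p (t ! p) (remove_entry p t))"
  then have j: "j < length t" using assms(2) by (simp add: length_remove_entry)
  have neq: "t ! i \<noteq> t ! p" if "i < length t" "i \<noteq> p" for i
    using assms that nth_eq_iff_index_eq by blast
  consider "j < p" "skip_index p j = j" | "j = p" | "p < j" "skip_index p (j - 1) = j"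
    by (cases "j < p"; cases "j = p") (auto simp: skip_index_def)
  then show "insert_entry p (t ! p) (remove_entry p t) ! j = t ! j"
    by cases (use j assms(2) neq[of j] in \<open>simp_all add: nth_insert_entry length_remove_entry
        nth_remove_entry\<close>)
qed

lemma length_perms: "t \<in> perms m \<Longrightarrow> length t = m"
  unfolding perms_def using distinct_card by fastforce

lemma insert_entry_in_perms:
  assumes "s \<in> perms m" "1 \<le> q" "q \<le> Suc m"
  shows "insert_entry p q s \<in> perms (Suc m)"
proof -
  have s: "distinct s" "set s = {1..m}" using assms(1) by (auto simp: perms_def)
  have "distinct (q # map (shift_from q) s)"
    using s(1) inj_on_subset[OF inj_shift_from] by (auto simp: distinct_map dest: sym)
  moreover have "set (map (shift_from q) s) = {1..Suc m} - {q}"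
    using s(2) bij_betw_shift_from[OF assms(2,3)] by (simp add: bij_betw_def)
  ultimately show ?thesis using assms(2,3)
    by (auto simp: perms_def set_insert_entry distinct_insert_entry simp del: distinct.simps)
qed

lemma del_nth_distinct:
  assumes "distinct t" "p < length t"
  shows "distinct (del_nth p t)" "set (del_nth p t) = set t - {t ! p}"
proof -
  have t: "t = take p t @ t ! p # drop (Suc p) t" using assms(2) by (rule id_take_nth_drop)
  then have "distinct (t ! p # del_nth p t)" using assms(1) distinct_middle by (metis del_nth_def)
  moreover have "set t = insert (t ! p) (set (del_nth p t))" by (subst t) (auto simp: del_nth_def)
  ultimately show "distinct (del_nth p t)" "set (del_nth p t) = set t - {t ! p}" by auto
qed

lemma remove_entry_in_perms:
  assumes t: "t \<in> perms (Suc m)" and p: "p < Suc m"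
  shows "remove_entry p t \<in> perms m"
proof -
  have "distinct t" "set t = {1..Suc m}" "p < length t"
    using t p length_perms[OF t] by (auto simp: perms_def)
  moreover from this have "t ! p \<in> {1..Suc m}" by (metis nth_mem)
  ultimately show ?thesis using bij_betw_unshift_from[of "t ! p" m] del_nth_distinct[of t p]
    by (auto simp: perms_def remove_entry_def bij_betw_def distinct_map inj_on_subset)
qed

text \<open>If position \<open>p \<le> 1\<close> of \<open>t\<close> is removable, the entries comparable with \<open>t ! p\<close> form an
  increasing chain, so deleting it lowers \<open>tau_perm k\<close> by a single binomial coefficient.\<close>
definition removable :: "nat \<Rightarrow> nat list \<Rightarrow> bool" where
  "removable p t \<longleftrightarrow> (\<forall>i j. p < i \<longrightarrow> i < j \<longrightarrow> j < length t \<longrightarrow>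
      t ! p < t ! i \<longrightarrow> t ! p < t ! j \<longrightarrow> t ! i < t ! j)"

definition increasing_above :: "nat \<Rightarrow> nat \<Rightarrow> nat list \<Rightarrow> bool" where
  "increasing_above p q s \<longleftrightarrow> (\<forall>i j. p \<le> i \<longrightarrow> i < j \<longrightarrow> j < length s \<longrightarrow>
      q \<le> s ! i \<longrightarrow> q \<le> s ! j \<longrightarrow> s ! i < s ! j)"

lemma increasing_above_mono: "increasing_above p q s \<Longrightarrow> p \<le> p' \<Longrightarrow> increasing_above p' q s"
  unfolding increasing_above_def by simp

lemma removable_insert_entry:
  assumes "p \<le> length s"
  shows "removable p (insert_entry p q s) \<longleftrightarrow> increasing_above p q s"
proof
  assume r: "removable p (insert_entry p q s)"
  show "increasing_above p q s"
    unfolding increasing_above_def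
  proof (intro allI impI)
    fix i j assume "p \<le> i" "i < j" "j < length s" "q \<le> s ! i" "q \<le> s ! j"
    then show "s ! i < s ! j"
      using assms r[unfolded removable_def, rule_format, of "Suc i" "Suc j"]
      by (simp add: nth_insert_entry)
  qed
next
  assume inc: "increasing_above p q s"
  show "removable p (insert_entry p q s)"
    unfolding removable_def
  proof (intro allI impI)
    fix i j assume ij: "p < i" "i < j" "j < length (insert_entry p q s)"
      and "insert_entry p q s ! p < insert_entry p q s ! i"
        "insert_entry p q s ! p < insert_entry p q s ! j"
    moreover obtain i' j' where "i = Suc i'" "j = Suc j'"
      using ij(1,2) by (metis less_imp_Suc_add)
    ultimately show "insert_entry p q s ! i < insert_entry p q s ! j"
      using assms inc[unfolded increasing_above_def, rule_format, of i' j']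
      by (simp add: nth_insert_entry)
  qed
qed

lemma avoids_remove_entry:
  assumes "avoids_1243_2143 t" "distinct t" "p < length t"
  shows "avoids_1243_2143 (remove_entry p t)"
  unfolding avoids_1243_2143_def
proof
  let ?s = "remove_entry p t" and ?g = "skip_index p"
  assume "\<exists>a b c d. a < b \<and> b < c \<and> c < d \<and> d < length ?s \<and>
      ?s ! a < ?s ! d \<and> ?s ! b < ?s ! d \<and> ?s ! d < ?s ! c"
  then obtain a b c d where abcd: "a < b" "b < c" "c < d" "d < length t - 1"
    and vals: "?s ! a < ?s ! d" "?s ! b < ?s ! d" "?s ! d < ?s ! c"
    using assms(3) by (auto simp: length_remove_entry)
  have range: "?g j < length t" if "j < length t - 1" for j
    using that assms(3) by (auto simp: skip_index_def)
  have "t ! ?g j \<noteq> t ! p" if "j < length t - 1" for j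
    using assms(2,3) range[OF that] nth_eq_iff_index_eq skip_index_neq by metis
  then have "?s ! i < ?s ! j \<longleftrightarrow> t ! ?g i < t ! ?g j" if "i < length t - 1" "j < length t - 1" for i j
    using that assms(3) by (simp add: nth_remove_entry unshift_from_less_iff)
  then have "t ! ?g a < t ! ?g d" "t ! ?g b < t ! ?g d" "t ! ?g d < t ! ?g c"
    using vals abcd by auto
  moreover have "?g a < ?g b" "?g b < ?g c" "?g c < ?g d" "?g d < length t"
    using abcd range by auto
  ultimately show False using assms(1) unfolding avoids_1243_2143_def by blast
qed

lemma avoids_insert_entry:
  assumes "avoids_1243_2143 s" "p \<le> 1" "p \<le> length s" "removable p (insert_entry p q s)"
  shows "avoids_1243_2143 (insert_entry p q s)"
  unfolding avoids_1243_2143_def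
proof
  let ?t = "insert_entry p q s"
  assume "\<exists>a b c d. a < b \<and> b < c \<and> c < d \<and> d < length ?t \<and>
      ?t ! a < ?t ! d \<and> ?t ! b < ?t ! d \<and> ?t ! d < ?t ! c"
  then obtain a b c d where abcd: "a < b" "b < c" "c < d" "d < length ?t"
    and vals: "?t ! a < ?t ! d" "?t ! b < ?t ! d" "?t ! d < ?t ! c" by blast
  show False
  proof (cases "p = a \<or> p = b")
    case True
    then have "?t ! p < ?t ! c" "?t ! p < ?t ! d" "p < c" using vals abcd by auto
    then have "?t ! c < ?t ! d"
      using assms(4) abcd unfolding removable_def by blast
    then show False using vals by simp
  next
    case False
    then have ne: "a \<noteq> p" "b \<noteq> p" "c \<noteq> p" "d \<noteq> p" using assms(2) abcd by auto
    define g where "g j = (if j < p then j else j - 1)" for j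
    have nth_t: "?t ! j = shift_from q (s ! g j)" if "j \<noteq> p" "j < length ?t" for j
      using that assms(3) by (auto simp: nth_insert_entry g_def)
    have "s ! g a < s ! g d" "s ! g b < s ! g d" "s ! g d < s ! g c"
      using vals abcd ne by (simp_all add: nth_t)
    moreover have "g a < g b" "g b < g c" "g c < g d" "g d < length s"
      using abcd ne assms(2) by (auto simp: g_def)
    ultimately show False using assms(1) unfolding avoids_1243_2143_def by blast
  qed
qed

lemma card_positions_perms:
  assumes "t \<in> perms L"
  shows "card {j. j < L \<and> P (t ! j)} = card {v \<in> {1..L}. P v}"
proof -
  have t: "distinct t" "set t = {1..L}" "length t = L"
    using assms length_perms by (auto simp: perms_def)
  have "bij_betw (nth t) {..<L} {1..L}"
    using t by (metis bij_betw_nth lessThan_atLeast0)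
  then have "bij_betw (nth t) {j \<in> {..<L}. P (t ! j)} {v \<in> {1..L}. P v}"
    by (rule bij_betw_Collect) simp
  then show ?thesis by (simp add: bij_betw_same_card)
qed

lemma tau_perm_insert_entry:
  assumes s: "s \<in> perms m" and q: "1 \<le> q" "q \<le> Suc m" and p: "p \<le> 1" "p \<le> m"
    and r: "removable p (insert_entry p q s)" and below: "p = 1 \<Longrightarrow> s ! 0 < q" and k: "k \<ge> 1"
  shows "tau_perm k (insert_entry p q s) = tau_perm k s + ((Suc m - q + p) choose (k - 1))"
proof -
  let ?t = "insert_entry p q s"
  let ?C = "{j. j < length ?t \<and> (j < p \<and> ?t ! j < ?t ! p \<or> p < j \<and> ?t ! p < ?t ! j)}"
  have t: "?t \<in> perms (Suc m)" using s q by (rule insert_entry_in_perms)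
  have ls: "length s = m" using s by (rule length_perms)
  have tp: "?t ! p = q" and t0: "p = 1 \<Longrightarrow> ?t ! 0 = s ! 0"
    using p ls below by (auto simp: nth_insert_entry)
  have chain: "\<forall>i\<in>?C. \<forall>j\<in>?C. i < j \<longrightarrow> ?t ! i < ?t ! j"
    using r p(1) unfolding removable_def by (auto simp: less_Suc_eq_0_disj)
  have "j \<in> ?C \<longleftrightarrow> j \<in> {j. j < Suc m \<and> q < ?t ! j} \<union> {..<p}" for j
  proof (cases "j < p")
    case True
    then have "p = 1" "j = 0" using p by auto
    then show ?thesis using tp t0 below ls by simp
  next
    case False
    then show ?thesis using tp ls by (cases "j = p") auto
  qed
  then have C: "?C = {j. j < Suc m \<and> q < ?t ! j} \<union> {..<p}" by blast
  have "{v \<in> {1..Suc m}. q < v} = {q<..Suc m}" using q by auto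
  then have "card {j. j < Suc m \<and> q < ?t ! j} = Suc m - q"
    using card_positions_perms[OF t, of "\<lambda>v. q < v"] by simp
  moreover have "{j. j < Suc m \<and> q < ?t ! j} \<inter> {..<p} = {}"
  proof -
    have "j < p \<Longrightarrow> \<not> q < ?t ! j" for j using t0 below p by (cases "p = 1") auto
    then show ?thesis by auto
  qed
  ultimately have "card ?C = Suc m - q + p" unfolding C by (simp add: card_Un_disjoint)
  moreover have "tau_perm k ?t = tau_perm k (del_nth p ?t) + (card ?C choose (k - 1))"
    using p ls k chain by (intro tau_perm_del_nth) auto
  moreover have "tau_perm k (del_nth p ?t) = tau_perm k s"
    using p ls by (simp add: del_nth_insert_entry tau_perm_map)
  ultimately show ?thesis by simp
qed

section \<open>The generating tree of permutations avoiding 1243 and 2143\<close>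

definition perms_1243_2143 :: "nat \<Rightarrow> nat list set" where
  "perms_1243_2143 m = {t \<in> perms m. avoids_1243_2143 t}"

lemma perms_1243_2143D:
  assumes "t \<in> perms_1243_2143 m"
  shows "t \<in> perms m" "distinct t" "set t = {1..m}" "length t = m" "avoids_1243_2143 t"
  using assms length_perms by (auto simp: perms_1243_2143_def perms_def)

lemma avoiders_eq_perms_1243_2143:
  "avoiders m {[1, 2, 4, 3], [2, 1, 4, 3]} = perms_1243_2143 m"
  unfolding avoiders_1243_2143 perms_1243_2143_def ..

lemma avoiders_1243_2143_increasing:
  "avoiders m {[1, 2, 4, 3], [2, 1, 4, 3], [1..<k+1]} = {t \<in> perms_1243_2143 m. tau_perm k t = 0}"
  unfolding avoiders_def perms_1243_2143_def avoiders_1243_2143[symmetric]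
  using contains_increasing_iff[of _ k] by (auto simp del: upt_Suc)

lemma increasing_above_of_removable:
  assumes "distinct s" "p < length s" "removable p s" "s ! p \<le> q" "\<forall>j<p. s ! j < q"
  shows "increasing_above 0 q s"
  unfolding increasing_above_def
proof (intro allI impI)
  fix i j assume ij: "0 \<le> i" "i < j" "j < length s" "q \<le> s ! i" "q \<le> s ! j"
  have neq: "s ! l \<noteq> s ! p" if "l < length s" "l \<noteq> p" for l
    using assms(1,2) that nth_eq_iff_index_eq by blast
  have "p \<le> i" using assms(5) ij(4) by (meson not_le not_less_iff_gr_or_eq)
  then consider "i = p" | "p < i" by linarith
  then show "s ! i < s ! j"
  proof cases
    case 1
    then show ?thesis using ij assms(4) neq[of j] by fastforce
  next
    case 2
    then have "s ! p < s ! i" "s ! p < s ! j" using ij assms(4) neq[of i] neq[of j] by fastforce+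
    then show ?thesis using assms(3) 2 ij unfolding removable_def by blast
  qed
qed

lemma nth_0_le_of_increasing_above:
  assumes "s \<in> perms m" "increasing_above 0 q s" "1 \<le> q" "q \<le> m"
  shows "s ! 0 \<le> q"
proof (rule ccontr)
  assume "\<not> s ! 0 \<le> q"
  have "q \<in> set s" using assms(1,3,4) by (auto simp: perms_def)
  then obtain j where j: "j < m" "s ! j = q"
    using length_perms[OF assms(1)] by (metis in_set_conv_nth)
  then have "0 < j" using \<open>\<not> s ! 0 \<le> q\<close> by (metis gr0I order_refl)
  then have "s ! 0 < s ! j"
    using assms(2)[unfolded increasing_above_def, rule_format, of 0 j] j \<open>\<not> s ! 0 \<le> q\<close>
      length_perms[OF assms(1)] by auto
  with j \<open>\<not> s ! 0 \<le> q\<close> show False by simp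
qed

lemma avoids_1243_2143D:
  "avoids_1243_2143 t \<Longrightarrow> a < b \<Longrightarrow> b < c \<Longrightarrow> c < d \<Longrightarrow> d < length t \<Longrightarrow>
    t ! a < t ! d \<Longrightarrow> t ! b < t ! d \<Longrightarrow> \<not> t ! d < t ! c"
  unfolding avoids_1243_2143_def by blast

lemma not_removable_0_between:
  assumes t: "t \<in> perms_1243_2143 m" and nr: "\<not> removable 0 t"
  obtains c where "1 < c" "c < m" "t ! 0 < t ! c" "t ! c < t ! 1"
proof -
  note T = perms_1243_2143D[OF t]
  have neq: "t ! i \<noteq> t ! j" if "i < m" "j < m" "i \<noteq> j" for i j
    using T(2,4) that nth_eq_iff_index_eq by blast
  obtain j1 j2 where j: "0 < j1" "j1 < j2" "j2 < m" "t ! 0 < t ! j1" "t ! 0 < t ! j2"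
      and "\<not> t ! j1 < t ! j2"
    using nr T(4) unfolding removable_def by blast
  then have j21: "t ! j2 < t ! j1" using neq[of j1 j2] by linarith
  show thesis
  proof (cases "j1 = 1")
    case True
    then show ?thesis using that[of j2] j j21 by auto
  next
    case False
    then have "\<not> t ! 1 < t ! j2" using avoids_1243_2143D[OF T(5), of 0 1 j1 j2] j j21 T(4) by auto
    then have "t ! j2 < t ! 1" using neq[of 1 j2] j False by fastforce
    then show ?thesis using that[of j2] j False by auto
  qed
qed

lemma not_removable_0:
  assumes t: "t \<in> perms_1243_2143 m" and nr: "\<not> removable 0 t"
  shows "removable 1 t" "t ! 0 < t ! 1 - 1" "\<exists>j. 1 < j \<and> j < m \<and> t ! j = t ! 1 - 1"
proof -
  note T = perms_1243_2143D[OF t]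
  obtain c where c: "1 < c" "c < m" "t ! 0 < t ! c" "t ! c < t ! 1"
    using not_removable_0_between[OF t nr] .
  show "removable 1 t"
    unfolding removable_def
  proof (intro allI impI)
    fix i j assume ij: "1 < i" "i < j" "j < length t" "t ! 1 < t ! i" "t ! 1 < t ! j"
    then have "\<not> t ! j < t ! i"
      using avoids_1243_2143D[OF T(5), of 0 1 i j] c by fastforce
    moreover have "t ! i \<noteq> t ! j" using ij T(2) by (simp add: nth_eq_iff_index_eq)
    ultimately show "t ! i < t ! j" by linarith
  qed
  have "t ! 1 \<in> {1..m}" "t ! c \<in> {1..m}" using T(3,4) c by (auto intro: nth_mem)
  then have "t ! 1 - 1 \<in> set t" using T(3) c by auto
  then obtain j where j: "j < m" "t ! j = t ! 1 - 1" using T(4) by (auto simp: in_set_conv_nth)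
  show lt: "t ! 0 < t ! 1 - 1" using c by linarith
  have "j \<noteq> 0" using j lt by (metis less_irrefl)
  moreover have "j \<noteq> 1"
  proof
    assume "j = 1"
    then have "t ! 1 = t ! 1 - 1" using j by simp
    then show False using c by linarith
  qed
  ultimately show "\<exists>j. 1 < j \<and> j < m \<and> t ! j = t ! 1 - 1" using j by (intro exI[of _ j]) auto
qed

lemma nth_1_le_of_increasing_above:
  assumes "t \<in> perms_1243_2143 m" "\<not> removable 0 t" "increasing_above 1 q t"
  shows "t ! 1 \<le> q"
proof (rule ccontr)
  assume "\<not> t ! 1 \<le> q"
  obtain j where "1 < j" "j < m" "t ! j = t ! 1 - 1" using not_removable_0[OF assms(1,2)] by blast
  then have "t ! 1 < t ! j"
    using assms(3)[unfolded increasing_above_def, rule_format, of 1 j] \<open>\<not> t ! 1 \<le> q\<close>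
      perms_1243_2143D(4)[OF assms(1)] by auto
  with \<open>t ! j = t ! 1 - 1\<close> show False by simp
qed

lemma removable_0_of_insert_1:
  assumes "removable 0 (insert_entry 1 q s)" "s ! 0 < q" "1 \<le> length s"
  shows "removable 0 s"
  unfolding removable_def
proof (intro allI impI)
  fix i j assume ij: "0 < i" "i < j" "j < length s" "s ! 0 < s ! i" "s ! 0 < s ! j"
  then have "shift_from q (s ! i) < shift_from q (s ! j)"
    using assms(1)[unfolded removable_def, rule_format, of "Suc i" "Suc j"] assms(2,3)
    by (auto simp: nth_insert_entry shift_from_def)
  then show "s ! i < s ! j" by simp
qed

lemma not_removable_0_insert_1:
  assumes "s \<in> perms m" "Suc (s ! 0) < q" "q \<le> Suc m"
  shows "\<not> removable 0 (insert_entry 1 q s)"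
proof
  assume r: "removable 0 (insert_entry 1 q s)"
  have "Suc (s ! 0) \<in> set s" using assms by (auto simp: perms_def)
  then obtain j where j: "j < m" "s ! j = Suc (s ! 0)"
    using length_perms[OF assms(1)] by (auto simp: in_set_conv_nth)
  then have "0 < j" by (metis gr0I n_not_Suc_n)
  then show False
    using r[unfolded removable_def, rule_format, of 1 "Suc j"] j assms(2) length_perms[OF assms(1)]
    by (simp add: nth_insert_entry)
qed

text \<open>The choice \<open>(True, i)\<close> is the child \<open>(i)\<close> in the group \<open>(0) \<dots> (l)\<close> of the rewriting rule,
  \<open>(False, i)\<close> the one in the group \<open>(1) \<dots> (l + 1)\<close>.\<close>
definition label_choices :: "nat \<Rightarrow> (bool \<times> nat) set" where
  "label_choices l = {(True, i) | i. i \<le> l} \<union> {(False, i) | i. 1 \<le> i \<and> i \<le> Suc l}"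

definition perm_label :: "nat list \<Rightarrow> nat" where
  "perm_label t = (if removable 0 t then length t - t ! 0 else Suc (length t) - t ! 1)"

text \<open>Inserting \<open>q\<close> in front of \<open>s \<in> perms m\<close> gives label \<open>m + 1 - q\<close>, inserting it at
  position 1 gives \<open>m + 2 - q\<close>. If position 0 of \<open>s\<close> is removable, the label \<open>l + 1\<close> of the
  second kind is realised by a front insertion instead.\<close>
fun perm_child :: "nat list \<Rightarrow> bool \<times> nat \<Rightarrow> nat list" where
  "perm_child s (True, i) = insert_entry 0 (Suc (length s) - i) s"
| "perm_child s (False, i) =
    (if removable 0 s \<and> i = Suc (perm_label s) then insert_entry 0 (s ! 0) s
     else insert_entry 1 (length s + 2 - i) s)"

definition perm_parent :: "nat list \<Rightarrow> nat list" where
  "perm_parent t = (if removable 0 t then remove_entry 0 t else remove_entry 1 t)"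

definition perm_choice :: "nat list \<Rightarrow> bool \<times> nat" where
  "perm_choice t = (removable 0 t \<and> perm_label t \<le> perm_label (perm_parent t), perm_label t)"

lemma insert_entry_in_perms_1243_2143:
  assumes "s \<in> perms_1243_2143 m" "p \<le> 1" "p \<le> m" "1 \<le> q" "q \<le> Suc m"
    and "increasing_above p q s"
  shows "insert_entry p q s \<in> perms_1243_2143 (Suc m)"
proof -
  note S = perms_1243_2143D[OF assms(1)]
  have "insert_entry p q s \<in> perms (Suc m)" using S(1) assms(4,5) by (rule insert_entry_in_perms)
  moreover have "avoids_1243_2143 (insert_entry p q s)"
    using S(5) assms(2,3,6) S(4)
    by (intro avoids_insert_entry) (simp_all add: removable_insert_entry)
  ultimately show ?thesis by (simp add: perms_1243_2143_def)
qed

lemma remove_entry_in_perms_1243_2143: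
  assumes "t \<in> perms_1243_2143 (Suc m)" "p < Suc m"
  shows "remove_entry p t \<in> perms_1243_2143 m"
proof -
  note T = perms_1243_2143D[OF assms(1)]
  have "remove_entry p t \<in> perms m" using T(1) assms(2) by (rule remove_entry_in_perms)
  moreover have "avoids_1243_2143 (remove_entry p t)"
    using T(5,2) assms(2) T(4) by (intro avoids_remove_entry) simp_all
  ultimately show ?thesis by (simp add: perms_1243_2143_def)
qed

lemma front_child:
  assumes s: "s \<in> perms_1243_2143 m" and q: "1 \<le> q" "q \<le> Suc m"
    and inc: "increasing_above 0 q s"
  defines "t \<equiv> insert_entry 0 q s"
  shows "t \<in> perms_1243_2143 (Suc m)" "removable 0 t" "perm_label t = Suc m - q"
    "perm_parent t = s" "perm_choice t = (Suc m - q \<le> perm_label s, Suc m - q)"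
    "k \<ge> 1 \<Longrightarrow> tau_perm k t = tau_perm k s + ((Suc m - q) choose (k - 1))"
proof -
  note S = perms_1243_2143D[OF s]
  show r: "removable 0 t" unfolding t_def using inc by (simp add: removable_insert_entry)
  show "t \<in> perms_1243_2143 (Suc m)"
    unfolding t_def using s q inc by (intro insert_entry_in_perms_1243_2143) auto
  show lab: "perm_label t = Suc m - q"
    using r S(4) by (simp add: t_def perm_label_def nth_insert_entry)
  show par: "perm_parent t = s" using r by (simp add: t_def perm_parent_def remove_insert_entry)
  show "perm_choice t = (Suc m - q \<le> perm_label s, Suc m - q)"
    using r lab par by (simp add: perm_choice_def)
  show "k \<ge> 1 \<Longrightarrow> tau_perm k t = tau_perm k s + ((Suc m - q) choose (k - 1))"
    using tau_perm_insert_entry[OF S(1) q _ _ r[unfolded t_def]] by (simp add: t_def)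
qed

lemma second_child:
  assumes s: "s \<in> perms_1243_2143 m" "1 \<le> m" and q: "s ! 0 < q" "q \<le> Suc m"
    and inc: "increasing_above 1 q s"
  defines "t \<equiv> insert_entry 1 q s"
  assumes nr: "\<not> removable 0 t"
  shows "t \<in> perms_1243_2143 (Suc m)" "perm_label t = Suc (Suc m) - q"
    "perm_parent t = s" "perm_choice t = (False, Suc (Suc m) - q)"
    "k \<ge> 1 \<Longrightarrow> tau_perm k t = tau_perm k s + ((Suc (Suc m) - q) choose (k - 1))"
proof -
  note S = perms_1243_2143D[OF s(1)]
  have r: "removable 1 t" unfolding t_def using inc S(4) s(2) by (simp add: removable_insert_entry)
  show "t \<in> perms_1243_2143 (Suc m)"
    unfolding t_def using s q inc by (intro insert_entry_in_perms_1243_2143) auto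
  show lab: "perm_label t = Suc (Suc m) - q"
    using nr S(4) s(2) by (simp add: t_def perm_label_def nth_insert_entry)
  show "perm_parent t = s"
    using nr S(4) s(2) by (simp add: t_def perm_parent_def remove_insert_entry)
  show "perm_choice t = (False, Suc (Suc m) - q)" using nr lab by (simp add: perm_choice_def)
  show "k \<ge> 1 \<Longrightarrow> tau_perm k t = tau_perm k s + ((Suc (Suc m) - q) choose (k - 1))"
    using tau_perm_insert_entry[OF S(1) _ q(2) _ s(2) r[unfolded t_def]] q
    by (simp add: t_def Suc_diff_le)
qed

lemma perm_child_cases_removable:
  assumes s: "s \<in> perms_1243_2143 m" "1 \<le> m" and c: "c \<in> label_choices (perm_label s)"
    and r: "removable 0 s"
  obtains (front) q where "perm_child s c = insert_entry 0 q s" "1 \<le> q" "q \<le> Suc m"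
      "increasing_above 0 q s" "c = (Suc m - q \<le> perm_label s, Suc m - q)"
  | (second) q where "perm_child s c = insert_entry 1 q s" "s ! 0 < q" "q \<le> Suc m"
      "increasing_above 1 q s" "\<not> removable 0 (insert_entry 1 q s)" "c = (False, Suc (Suc m) - q)"
proof -
  note S = perms_1243_2143D[OF s(1)]
  obtain b i where bi: "c = (b, i)" by (cases c)
  have s0: "1 \<le> s ! 0" "s ! 0 \<le> m" using S(3,4) s(2) nth_mem[of 0 s] by auto
  have l: "perm_label s = m - s ! 0" using r S(4) by (simp add: perm_label_def)
  have inc: "increasing_above 0 q s" if "s ! 0 \<le> q" for q
    using increasing_above_of_removable[OF S(2) _ r that] S(4) s(2) by simp
  consider "b" "i \<le> m - s ! 0" | "\<not> b" "i = Suc (m - s ! 0)" | "\<not> b" "1 \<le> i" "i \<le> m - s ! 0"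
    using c l bi by (auto simp: label_choices_def le_Suc_eq)
  then show thesis
  proof cases
    case 1
    then show thesis using front[of "Suc m - i"] inc[of "Suc m - i"] s0 bi l S(4) by auto
  next
    case 2
    then show thesis
      using front[of "s ! 0"] inc[of "s ! 0"] s0 bi l r S(4) by (auto simp: Suc_diff_le)
  next
    case 3
    then have q: "s ! 0 < m + 2 - i" "m + 2 - i \<le> Suc m" by auto
    show thesis
    proof (rule second[OF _ q])
      show "perm_child s c = insert_entry 1 (m + 2 - i) s" using 3 bi l r S(4) by auto
      show "increasing_above 1 (m + 2 - i) s"
        using inc[of "m + 2 - i"] q by (auto intro: increasing_above_mono)
      show "\<not> removable 0 (insert_entry 1 (m + 2 - i) s)"
        using S(1) 3 s0 by (intro not_removable_0_insert_1) auto
      show "c = (False, Suc (Suc m) - (m + 2 - i))" using 3 bi by auto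
    qed
  qed
qed

lemma perm_child_cases_not_removable:
  assumes s: "s \<in> perms_1243_2143 m" and c: "c \<in> label_choices (perm_label s)"
    and nr: "\<not> removable 0 s"
  obtains (front) q where "perm_child s c = insert_entry 0 q s" "1 \<le> q" "q \<le> Suc m"
      "increasing_above 0 q s" "c = (Suc m - q \<le> perm_label s, Suc m - q)"
  | (second) q where "perm_child s c = insert_entry 1 q s" "s ! 0 < q" "q \<le> Suc m"
      "increasing_above 1 q s" "\<not> removable 0 (insert_entry 1 q s)" "c = (False, Suc (Suc m) - q)"
proof -
  note S = perms_1243_2143D[OF s] and N = not_removable_0[OF s nr]
  obtain b i where bi: "c = (b, i)" by (cases c)
  have l: "perm_label s = Suc m - s ! 1" using nr S(4) by (simp add: perm_label_def)
  have s1: "1 \<le> s ! 1" "s ! 1 \<le> m" using S(3,4) N(3) nth_mem[of 1 s] by auto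
  have inc: "increasing_above 0 q s" if "s ! 1 \<le> q" for q
  proof (rule increasing_above_of_removable[OF S(2) _ N(1) that])
    show "1 < length s" using N(3) S(4) by auto
    show "\<forall>j<1. s ! j < q" using N(2) that by auto
  qed
  consider "b" "i \<le> Suc m - s ! 1" | "\<not> b" "1 \<le> i" "i \<le> Suc (Suc m - s ! 1)"
    using c l bi by (auto simp: label_choices_def)
  then show thesis
  proof cases
    case 1
    then show thesis using front[of "Suc m - i"] inc[of "Suc m - i"] s1 bi l S(4) by auto
  next
    case 2
    then have q: "s ! 1 \<le> m + 2 - i" "s ! 0 < m + 2 - i" "m + 2 - i \<le> Suc m"
      using N(2) s1 by auto
    show thesis
    proof (rule second[OF _ q(2,3)])
      show "perm_child s c = insert_entry 1 (m + 2 - i) s" using 2 bi nr S(4) by auto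
      show "increasing_above 1 (m + 2 - i) s"
        using inc[OF q(1)] by (auto intro: increasing_above_mono)
      show "\<not> removable 0 (insert_entry 1 (m + 2 - i) s)"
        using removable_0_of_insert_1 nr q(2) S(4) s1 N(3) by fastforce
      show "c = (False, Suc (Suc m) - (m + 2 - i))" using 2 bi by auto
    qed
  qed
qed

lemma perm_child_cases:
  assumes "s \<in> perms_1243_2143 m" "1 \<le> m" "c \<in> label_choices (perm_label s)"
  obtains (front) q where "perm_child s c = insert_entry 0 q s" "1 \<le> q" "q \<le> Suc m"
      "increasing_above 0 q s" "c = (Suc m - q \<le> perm_label s, Suc m - q)"
  | (second) q where "perm_child s c = insert_entry 1 q s" "s ! 0 < q" "q \<le> Suc m"
      "increasing_above 1 q s" "\<not> removable 0 (insert_entry 1 q s)" "c = (False, Suc (Suc m) - q)"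
  using perm_child_cases_removable[OF assms] perm_child_cases_not_removable[OF assms(1,3)] by blast

lemma perm_child_props:
  assumes s: "s \<in> perms_1243_2143 m" "1 \<le> m" and c: "c \<in> label_choices (perm_label s)"
  shows "perm_child s c \<in> perms_1243_2143 (Suc m)" "perm_label (perm_child s c) = snd c"
    "perm_parent (perm_child s c) = s" "perm_choice (perm_child s c) = c"
    "k \<ge> 1 \<Longrightarrow> tau_perm k (perm_child s c) = tau_perm k s + (snd c choose (k - 1))"
proof -
  have "perm_child s c \<in> perms_1243_2143 (Suc m) \<and> perm_label (perm_child s c) = snd c \<and>
      perm_parent (perm_child s c) = s \<and> perm_choice (perm_child s c) = c \<and>
      (\<forall>k\<ge>1. tau_perm k (perm_child s c) = tau_perm k s + (snd c choose (k - 1)))"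
    using s c
  proof (cases rule: perm_child_cases)
    case (front q)
    then show ?thesis using front_child[OF s(1) front(2-4)] by simp
  next
    case (second q)
    then show ?thesis using second_child[OF s second(2-5)] by simp
  qed
  then show "perm_child s c \<in> perms_1243_2143 (Suc m)" "perm_label (perm_child s c) = snd c"
    "perm_parent (perm_child s c) = s" "perm_choice (perm_child s c) = c"
    "k \<ge> 1 \<Longrightarrow> tau_perm k (perm_child s c) = tau_perm k s + (snd c choose (k - 1))"
    by auto
qed

lemma perm_parent_removable:
  assumes t: "t \<in> perms_1243_2143 (Suc m)" "1 \<le> m" and r: "removable 0 t"
  shows "perm_parent t \<in> perms_1243_2143 m \<and>
    perm_choice t \<in> label_choices (perm_label (perm_parent t)) \<and>
    perm_child (perm_parent t) (perm_choice t) = t"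
proof -
  note T = perms_1243_2143D[OF t(1)]
  define s q where "s = remove_entry 0 t" and "q = t ! 0"
  have sC: "s \<in> perms_1243_2143 m"
    unfolding s_def using t(1) by (rule remove_entry_in_perms_1243_2143) simp
  note S = perms_1243_2143D[OF sC]
  have t_eq: "t = insert_entry 0 q s"
    unfolding s_def q_def using insert_remove_entry[OF T(2)] T(4) by simp
  have q: "1 \<le> q" "q \<le> Suc m" using T(3,4) nth_mem[of 0 t] by (auto simp: q_def)
  have inc: "increasing_above 0 q s" using r unfolding t_eq by (simp add: removable_insert_entry)
  note F = front_child[OF sC q inc, folded t_eq]
  consider (special) "removable 0 s" "q = s ! 0" | (regular) "Suc m - q \<le> perm_label s"
  proof (cases "removable 0 s")
    case True
    have "s ! 0 \<le> q"
      using nth_0_le_of_increasing_above[OF S(1) inc q(1)] S(3,4) t(2) nth_mem[of 0 s]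
      by (cases "q \<le> m") auto
    then show thesis using that True by (cases "q = s ! 0") (auto simp: perm_label_def S(4))
  next
    case False
    have "s ! 1 \<le> q"
      using nth_1_le_of_increasing_above[OF sC False increasing_above_mono[OF inc]] by simp
    then show thesis using that False by (auto simp: perm_label_def S(4))
  qed
  then have "perm_choice t \<in> label_choices (perm_label s) \<and> perm_child s (perm_choice t) = t"
  proof cases
    case special
    then show ?thesis using F(5) t_eq S(3,4) t(2) nth_mem[of 0 s]
      by (auto simp: label_choices_def perm_label_def Suc_diff_le)
  next
    case regular
    then show ?thesis using F(5) t_eq q S(4) by (auto simp: label_choices_def)
  qed
  then show ?thesis using sC F(4) by simp
qed

lemma perm_parent_not_removable:
  assumes t: "t \<in> perms_1243_2143 (Suc m)" "1 \<le> m" and nr: "\<not> removable 0 t"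
  shows "perm_parent t \<in> perms_1243_2143 m \<and>
    perm_choice t \<in> label_choices (perm_label (perm_parent t)) \<and>
    perm_child (perm_parent t) (perm_choice t) = t"
proof -
  note T = perms_1243_2143D[OF t(1)] and N = not_removable_0[OF t(1) nr]
  define s q where "s = remove_entry 1 t" and "q = t ! 1"
  have sC: "s \<in> perms_1243_2143 m"
    unfolding s_def using t by (intro remove_entry_in_perms_1243_2143) auto
  note S = perms_1243_2143D[OF sC]
  have t_eq: "t = insert_entry 1 q s"
    unfolding s_def q_def using insert_remove_entry[OF T(2)] T(4) t(2) by simp
  have q: "1 \<le> q" "q \<le> Suc m" using T(3,4) t(2) nth_mem[of 1 t] by (auto simp: q_def)
  have inc: "increasing_above 1 q s"
    using N(1) S(4) t(2) unfolding t_eq by (simp add: removable_insert_entry)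
  have "t ! 0 = shift_from q (s ! 0)" using S(4) t(2) by (simp add: t_eq nth_insert_entry)
  then have s0: "s ! 0 = t ! 0" "s ! 0 < q"
    using N(2) by (auto simp: q_def shift_from_def split: if_splits)
  note G = second_child[OF sC t(2) s0(2) q(2) inc nr[unfolded t_eq], folded t_eq]
  have "Suc (Suc m) - q \<le> perm_label s \<or> \<not> removable 0 s \<and> Suc (Suc m) - q \<le> Suc (perm_label s)"
  proof (cases "removable 0 s")
    case True
    then show ?thesis using N(2) s0 by (auto simp: perm_label_def S(4) q_def)
  next
    case False
    then show ?thesis
      using nth_1_le_of_increasing_above[OF sC False inc] by (auto simp: perm_label_def S(4))
  qed
  then have "perm_choice t \<in> label_choices (perm_label s) \<and> perm_child s (perm_choice t) = t"
    using G(4) t_eq q S(4) by (auto simp: label_choices_def)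
  then show ?thesis using sC G(3) by simp
qed

lemma perms_1243_2143_Suc_0: "perms_1243_2143 (Suc 0) = {[1]}"
proof -
  have "t = [1]" if "t \<in> perms 1" for t
    using that length_perms[OF that] by (cases t) (auto simp: perms_def)
  then show ?thesis by (auto simp: perms_1243_2143_def perms_def avoids_1243_2143_def)
qed

lemma tau_perm_singleton: "tau_perm k [1] = tau_path k []"
proof -
  have "incr_sets k [1] = {I. I \<subseteq> {0} \<and> card I = k}" by (auto simp: incr_sets_def)
  then have "tau_perm k [1] = 1 choose k"
    using n_subsets[of "{0::nat}" k] by (simp add: tau_perm_eq_card)
  then show ?thesis by (cases k) (simp_all add: tau_path_def)
qed

lemma generating_tree_perms_1243_2143:
  "generating_tree (\<lambda>n. perms_1243_2143 (Suc n)) perm_label label_choices (\<lambda>_ c. snd c) perm_child"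
proof
  fix n
  let ?A = "SIGMA s:perms_1243_2143 (Suc n). label_choices (perm_label s)"
  have parent: "perm_parent t \<in> perms_1243_2143 (Suc n) \<and>
      perm_choice t \<in> label_choices (perm_label (perm_parent t)) \<and>
      perm_child (perm_parent t) (perm_choice t) = t" if "t \<in> perms_1243_2143 (Suc (Suc n))" for t
    using perm_parent_removable[OF that] perm_parent_not_removable[OF that] by fastforce
  show "bij_betw (case_prod perm_child) ?A (perms_1243_2143 (Suc (Suc n)))"
  proof (rule bij_betw_byWitness[where f' = "\<lambda>t. (perm_parent t, perm_choice t)"])
    show "\<forall>x\<in>?A. (perm_parent (case_prod perm_child x), perm_choice (case_prod perm_child x)) = x"
      using perm_child_props(3,4) by fastforce
    show "\<forall>t\<in>perms_1243_2143 (Suc (Suc n)). case_prod perm_child (perm_parent t, perm_choice t) = t"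
      using parent by simp
    show "case_prod perm_child ` ?A \<subseteq> perms_1243_2143 (Suc (Suc n))"
      using perm_child_props(1) by fastforce
    show "(\<lambda>t. (perm_parent t, perm_choice t)) ` perms_1243_2143 (Suc (Suc n)) \<subseteq> ?A"
      using parent by auto
  qed
next
  fix s n c
  assume "s \<in> perms_1243_2143 (Suc n)" "c \<in> label_choices (perm_label s)"
  then show "perm_label (perm_child s c) = snd c" by (simp add: perm_child_props(2))
qed

section \<open>The generating tree of Schroeder paths\<close>

lemma walk_neq_Nil [simp]: "walk p ss \<noteq> []"
  by (cases ss) auto

lemma hd_walk [simp]: "hd (walk p ss) = p"
  by (cases ss) auto

lemma last_walk: "last (walk p ss) = foldl step_end p ss"
  by (induction ss arbitrary: p) auto

lemma set_walk_append:
  "set (walk p (xs @ ys)) = set (walk p xs) \<union> set (walk (foldl step_end p xs) ys)"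
proof (induction xs arbitrary: p)
  case Nil
  then show ?case by (cases ys) auto
next
  case (Cons x xs)
  then show ?case by auto
qed

lemma heights_append: "heights p (xs @ ys) = heights p xs @ heights (foldl step_end p xs) ys"
proof (induction xs arbitrary: p)
  case (Cons x xs)
  then show ?case by (cases p) auto
qed simp

lemma foldl_step_end_East: "foldl step_end (a, c) (replicate j East) = (a + int j, c)"
  by (induction j arbitrary: a) auto

lemma set_walk_East: "set (walk (a, c) (replicate j East)) = (\<lambda>l. (a + int l, c)) ` {..j}"
proof (induction j arbitrary: a)
  case (Suc j)
  then show ?case by (simp add: atMost_Suc_eq_insert_0 image_image add_ac)
qed simp

lemma heights_translate: "heights (a + d, c + d) ss = heights (a, c) ss"
proof (induction ss arbitrary: a c)
  case (Cons s ss)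
  then show ?case
    using Cons.IH[of "a + 1" c] Cons.IH[of a "c + 1"] Cons.IH[of "a + 1" "c + 1"]
    by (cases s) (simp_all add: ac_simps)
qed simp

definition above_diag :: "step list \<Rightarrow> bool" where
  "above_diag ss \<longleftrightarrow> (\<forall>(a, c)\<in>set (walk (0, 0) ss). a \<le> c)"

lemma schroeder_iff: "ss \<in> schroeder n \<longleftrightarrow> foldl step_end (0, 0) ss = (int n, int n) \<and> above_diag ss"
  by (simp add: schroeder_def above_diag_def last_walk)

lemma above_diag_append:
  "above_diag (xs @ ys) \<longleftrightarrow>
    above_diag xs \<and> (\<forall>(a, c)\<in>set (walk (foldl step_end (0, 0) xs) ys). a \<le> c)"
  by (auto simp: above_diag_def set_walk_append)

lemma above_diag_endpoint: "above_diag r \<Longrightarrow> foldl step_end (0, 0) r = (a, c) \<Longrightarrow> a \<le> c"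
  by (metis (mono_tags, lifting) above_diag_def case_prodD last_in_set last_walk walk_neq_Nil)

lemma East_suffix_in_schroeder:
  assumes "foldl step_end (0, 0) r = (a, c)"
  shows "r @ replicate j East \<in> schroeder n \<longleftrightarrow> above_diag r \<and> a + int j = int n \<and> c = int n"
  using assms by (auto simp: schroeder_iff above_diag_append set_walk_East foldl_step_end_East)

lemma Diag_East_suffix_in_schroeder:
  assumes "foldl step_end (0, 0) r = (a, c)"
  shows "r @ Diag # replicate j East \<in> schroeder (Suc n) \<longleftrightarrow>
    above_diag r \<and> a + int j = int n \<and> c = int n"
  using assms above_diag_endpoint[of r a c]
  by (auto simp: schroeder_iff above_diag_append set_walk_East foldl_step_end_East)

lemma North_East_suffix_in_schroeder:
  assumes "foldl step_end (0, 0) r = (a, c)"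
  shows "r @ North # replicate j East \<in> schroeder (Suc n) \<longleftrightarrow>
    above_diag r \<and> a + int j = int n + 1 \<and> c = int n"
  using assms above_diag_endpoint[of r a c]
  by (auto simp: schroeder_iff above_diag_append set_walk_East foldl_step_end_East)

lemma tau_path_Diag_East_suffix:
  assumes "foldl step_end (0, 0) r = (a, c)"
  shows "tau_path k (r @ Diag # replicate j East) =
    tau_path k (r @ replicate j East) + (nat (c - a) choose (k - 1))"
  using assms heights_translate[of a 1 c "replicate j East"]
  by (simp add: tau_path_def heights_append)

lemma tau_path_North_East_suffix:
  assumes "foldl step_end (0, 0) r = (a, c)"
  shows "tau_path k (r @ North # replicate (Suc j) East) =
    tau_path k (r @ replicate j East) + (nat (c + 1 - a) choose (k - 1))"
  using assms heights_translate[of a 1 "c" "replicate j East"]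
  by (simp add: tau_path_def heights_append)

definition east_run :: "step list \<Rightarrow> nat" where
  "east_run ss = length (takeWhile (\<lambda>s. s = East) (rev ss))"

lemma dropWhile_East_suffix:
  "X \<noteq> East \<Longrightarrow> dropWhile (\<lambda>s. s = East) (rev (r @ X # replicate j East)) = X # rev r"
  by (simp add: dropWhile_append3)

lemma east_run_East_suffix: "X \<noteq> East \<Longrightarrow> east_run (r @ X # replicate j East) = j"
  by (simp add: east_run_def takeWhile_append)

lemma east_run_ge: "j \<le> east_run (r @ replicate j East)"
  by (simp add: east_run_def takeWhile_append)

lemma takeWhile_East:
  "takeWhile (\<lambda>s. s = East) xs = replicate (length (takeWhile (\<lambda>s. s = East) xs)) East"
  by (rule replicate_length_same[symmetric]) (auto dest: set_takeWhileD)

lemma rev_eq_East_run: "rev ss = replicate (east_run ss) East @ dropWhile (\<lambda>s. s = East) (rev ss)"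
  unfolding east_run_def by (subst takeWhile_East[symmetric]) simp

lemma East_suffix_of_east_run:
  assumes "i \<le> east_run ss"
  shows "ss = take (length ss - i) ss @ replicate i East"
proof -
  have "take i (rev ss) = replicate i East"
    using assms by (subst rev_eq_East_run) (simp add: take_append)
  moreover have "i \<le> length ss"
    using assms length_takeWhile_le[of "\<lambda>s. s = East" "rev ss"] by (simp add: east_run_def)
  ultimately have "rev (drop (length ss - i) ss) = replicate i East" by (simp add: rev_drop)
  then have "drop (length ss - i) ss = replicate i East"
    by (metis rev_replicate rev_rev_ident)
  then show ?thesis by (metis append_take_drop_id)
qed

lemma east_run_cases:
  obtains (East) "ss = replicate (length ss) East"
  | (non_East) r X where "X \<noteq> East" "ss = r @ X # replicate (east_run ss) East"
proof (cases "dropWhile (\<lambda>s. s = East) (rev ss)")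
  case Nil
  then have "rev ss = replicate (east_run ss) East"
    using rev_eq_East_run[of ss] by (simp only: append_Nil2)
  then have "ss = replicate (east_run ss) East" by (metis rev_replicate rev_rev_ident)
  then show thesis using East by (metis length_replicate)
next
  case (Cons X d)
  then have X: "X \<noteq> East" using hd_dropWhile[of "\<lambda>s. s = East" "rev ss"] by auto
  have "rev ss = replicate (east_run ss) East @ X # d"
    using rev_eq_East_run[of ss] Cons by simp
  then have "ss = rev d @ X # replicate (east_run ss) East"
    by (metis rev_append rev_replicate rev_rev_ident rev.simps(2) append_assoc append_Cons
        append_Nil)
  with X show thesis by (rule non_East)
qed

text \<open>A child inserts a diagonal step before the last \<open>i\<close> east steps, or a north step followed
  by one more east step before the last \<open>i - 1\<close> east steps; either way its final run of east
  steps has length \<open>i\<close>.\<close>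
fun path_child :: "step list \<Rightarrow> bool \<times> nat \<Rightarrow> step list" where
  "path_child ss (True, i) = take (length ss - i) ss @ Diag # replicate i East"
| "path_child ss (False, i) = take (Suc (length ss) - i) ss @ North # replicate i East"

definition path_parent :: "step list \<Rightarrow> step list" where
  "path_parent ss = (let d = dropWhile (\<lambda>s. s = East) (rev ss) in
     rev (tl d) @ replicate (if hd d = Diag then east_run ss else east_run ss - 1) East)"

definition path_choice :: "step list \<Rightarrow> bool \<times> nat" where
  "path_choice ss = (hd (dropWhile (\<lambda>s. s = East) (rev ss)) = Diag, east_run ss)"

lemma path_parent_choice_East_suffix:
  assumes "X \<noteq> East"
  shows "path_parent (r @ X # replicate j East) =
      r @ replicate (if X = Diag then j else j - 1) East"
    "path_choice (r @ X # replicate j East) = (X = Diag, j)"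
  unfolding path_parent_def path_choice_def dropWhile_East_suffix[OF assms]
    east_run_East_suffix[OF assms] by simp_all

lemma path_child_Diag:
  assumes ss: "ss \<in> schroeder n" and i: "i \<le> east_run ss"
  defines "t \<equiv> path_child ss (True, i)"
  shows "t \<in> schroeder (Suc n) \<and> east_run t = i \<and> path_parent t = ss \<and>
    path_choice t = (True, i) \<and> (\<forall>k. tau_path k t = tau_path k ss + (i choose (k - 1)))"
proof -
  define r where "r = take (length ss - i) ss"
  have ss_eq: "ss = r @ replicate i East" unfolding r_def using i by (rule East_suffix_of_east_run)
  obtain a h where end_r: "foldl step_end (0, 0) r = (a, h)" by fastforce
  have "above_diag r" "a + int i = int n" "h = int n"
    using ss East_suffix_in_schroeder[OF end_r] ss_eq by auto
  moreover from this have "nat (h - a) = i" by simp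
  moreover have "t = r @ Diag # replicate i East" by (simp add: t_def r_def)
  ultimately show ?thesis
    using Diag_East_suffix_in_schroeder[OF end_r] tau_path_Diag_East_suffix[OF end_r]
      path_parent_choice_East_suffix[of Diag r i] east_run_East_suffix[of Diag r i]
    by (simp add: ss_eq)
qed

lemma path_child_North:
  assumes ss: "ss \<in> schroeder n" and j: "j \<le> east_run ss"
  defines "t \<equiv> path_child ss (False, Suc j)"
  shows "t \<in> schroeder (Suc n) \<and> east_run t = Suc j \<and> path_parent t = ss \<and>
    path_choice t = (False, Suc j) \<and> (\<forall>k. tau_path k t = tau_path k ss + (Suc j choose (k - 1)))"
proof -
  define r where "r = take (length ss - j) ss"
  have ss_eq: "ss = r @ replicate j East" unfolding r_def using j by (rule East_suffix_of_east_run)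
  have "Suc (length ss) - Suc j = length ss - j" by simp
  then have t_eq: "t = r @ North # replicate (Suc j) East" by (simp add: t_def r_def)
  obtain a h where end_r: "foldl step_end (0, 0) r = (a, h)" by fastforce
  have "above_diag r" "a + int j = int n" "h = int n"
    using ss East_suffix_in_schroeder[OF end_r] ss_eq by auto
  moreover from this have "nat (h + 1 - a) = Suc j" by simp
  ultimately show ?thesis
    using North_East_suffix_in_schroeder[OF end_r, of "Suc j" n]
      tau_path_North_East_suffix[OF end_r]
      path_parent_choice_East_suffix[of North r "Suc j"] east_run_East_suffix[of North r "Suc j"]
    by (simp add: t_eq ss_eq)
qed

lemma path_child_props:
  assumes ss: "ss \<in> schroeder n" and c: "c \<in> label_choices (east_run ss)"
  shows "path_child ss c \<in> schroeder (Suc n) \<and> east_run (path_child ss c) = snd c \<and>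
    path_parent (path_child ss c) = ss \<and> path_choice (path_child ss c) = c \<and>
    (\<forall>k. tau_path k (path_child ss c) = tau_path k ss + (snd c choose (k - 1)))"
proof -
  consider i where "c = (True, i)" "i \<le> east_run ss"
    | j where "c = (False, Suc j)" "j \<le> east_run ss"
    using c by (auto simp: label_choices_def Suc_le_eq gr0_conv_Suc)
  then show ?thesis
    by cases (use path_child_Diag[OF ss] path_child_North[OF ss] in auto)
qed

lemma path_parent_props:
  assumes ss: "ss \<in> schroeder (Suc n)"
  shows "path_parent ss \<in> schroeder n \<and> path_choice ss \<in> label_choices (east_run (path_parent ss))
    \<and> path_child (path_parent ss) (path_choice ss) = ss"
proof (cases ss rule: east_run_cases)
  case East
  then have "foldl step_end (0, 0) ss = (int (length ss), 0)"
    by (metis foldl_step_end_East add_0)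
  then show ?thesis using ss by (simp add: schroeder_iff)
next
  case (non_East r X)
  define j where "j = east_run ss"
  obtain a h where end_r: "foldl step_end (0, 0) r = (a, h)" by fastforce
  have ss_eq: "ss = r @ X # replicate j East" using non_East(2) by (simp add: j_def)
  consider "X = Diag" | "X = North" using non_East(1) by (cases X) auto
  then show ?thesis
  proof cases
    case 1
    then have "above_diag r" "a + int j = int n" "h = int n"
      using ss Diag_East_suffix_in_schroeder[OF end_r] by (auto simp: ss_eq)
    then show ?thesis
      using East_suffix_in_schroeder[OF end_r, of j n] east_run_ge[of j r]
        path_parent_choice_East_suffix[of X r j] 1
      by (simp add: ss_eq label_choices_def)
  next
    case 2
    then have "above_diag r" "a + int j = int n + 1" "h = int n"
      using ss North_East_suffix_in_schroeder[OF end_r] by (auto simp: ss_eq)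
    moreover from this have "1 \<le> j" using above_diag_endpoint[OF _ end_r] by fastforce
    then obtain i where "j = Suc i" by (cases j) auto
    ultimately show ?thesis
      using East_suffix_in_schroeder[OF end_r, of i n] east_run_ge[of i r]
        path_parent_choice_East_suffix[of X r j] 2
      by (simp add: ss_eq label_choices_def)
  qed
qed

lemma generating_tree_schroeder:
  "generating_tree schroeder east_run label_choices (\<lambda>_ c. snd c) path_child"
proof
  fix n
  let ?A = "SIGMA ss:schroeder n. label_choices (east_run ss)"
  show "bij_betw (case_prod path_child) ?A (schroeder (Suc n))"
  proof (rule bij_betw_byWitness[where f' = "\<lambda>ss. (path_parent ss, path_choice ss)"])
    show "\<forall>x\<in>?A. (path_parent (case_prod path_child x), path_choice (case_prod path_child x)) = x"
      using path_child_props by fastforce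
    show "\<forall>ss\<in>schroeder (Suc n). case_prod path_child (path_parent ss, path_choice ss) = ss"
      using path_parent_props by simp
    show "case_prod path_child ` ?A \<subseteq> schroeder (Suc n)"
      using path_child_props by fastforce
    show "(\<lambda>ss. (path_parent ss, path_choice ss)) ` schroeder (Suc n) \<subseteq> ?A"
      using path_parent_props by auto
  qed
next
  fix ss n c
  assume "ss \<in> schroeder n" "c \<in> label_choices (east_run ss)"
  then show "east_run (path_child ss c) = snd c" using path_child_props by simp
qed

lemma foldl_step_end_sum:
  "a + c + int (length ss) \<le> fst (foldl step_end (a, c) ss) + snd (foldl step_end (a, c) ss)"
proof (induction ss arbitrary: a c)
  case (Cons s ss)
  show ?case
    using Cons.IH[of "a + 1" c] Cons.IH[of a "c + 1"] Cons.IH[of "a + 1" "c + 1"] by (cases s) auto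
qed simp

lemma schroeder_0: "schroeder 0 = {[]}"
proof -
  have "ss = []" if "ss \<in> schroeder 0" for ss
    using that foldl_step_end_sum[of 0 0 ss] by (simp add: schroeder_iff)
  then show ?thesis by (auto simp: schroeder_iff above_diag_def)
qed

lemma walk_below_iff_heights:
  "(\<forall>(a, c)\<in>set (walk p ss). c - a \<le> d) \<longleftrightarrow>
    (\<forall>h\<in>set (heights p ss). h \<le> d) \<and> (case foldl step_end p ss of (a, c) \<Rightarrow> c - a \<le> d)"
proof (induction ss arbitrary: p)
  case Nil
  then show ?case by (cases p) simp
next
  case (Cons s ss)
  obtain a c where p: "p = (a, c)" by fastforce
  have "step_end p s \<in> set (walk (step_end p s) ss)" by (metis hd_walk list.set_sel(1) walk_neq_Nil)
  then show ?case using Cons.IH[of "step_end p s"] by (cases s) (auto simp: p)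
qed

lemma no_cross_iff_tau_path:
  assumes "ss \<in> schroeder n" "k \<ge> 2"
  shows "no_cross (int k - 2) ss \<longleftrightarrow> tau_path k ss = 0"
proof -
  have "no_cross (int k - 2) ss \<longleftrightarrow> (\<forall>h\<in>set (heights (0, 0) ss). h \<le> int k - 2)"
    using walk_below_iff_heights[of "(0, 0)" ss "int k - 2"] assms
    by (simp add: no_cross_def schroeder_iff)
  also have "\<dots> \<longleftrightarrow> (\<forall>h\<in>set (heights (0, 0) ss). nat h choose (k - 1) = 0)"
    using assms(2) by (auto simp: binomial_eq_0_iff)
  also have "\<dots> \<longleftrightarrow> tau_path k ss = 0"
    using assms(2) by (simp add: tau_path_def sum_list_eq_0_iff)
  finally show ?thesis .
qed

lemma schroeder_perms_1243_2143_bij: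
  "\<exists>\<phi>. bij_betw \<phi> (schroeder n) (perms_1243_2143 (Suc n)) \<and>
    (\<forall>ss\<in>schroeder n. \<forall>k\<ge>1. tau_perm k (\<phi> ss) = tau_path k ss)"
proof -
  let ?R = "\<lambda>ss t. \<forall>k\<ge>1. tau_perm k t = tau_path k ss"
  have root_label: "east_run [] = perm_label [1]"
    by (simp add: east_run_def perm_label_def removable_def)
  have R_child: "?R (path_child ss c) (perm_child t c)"
    if "ss \<in> schroeder m" "t \<in> perms_1243_2143 (Suc m)" "c \<in> label_choices (east_run ss)"
      "east_run ss = perm_label t" "?R ss t" for m ss t c
    using that path_child_props[OF that(1,3)] perm_child_props(5)[OF that(2) _, of c] by simp
  show ?thesis
    using generating_tree_iso[OF generating_tree_schroeder generating_tree_perms_1243_2143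
        schroeder_0 perms_1243_2143_Suc_0 root_label, of ?R] tau_perm_singleton R_child by blast
qed

theorem mainTheorem8:
  fixes n :: nat
  shows "\<exists>\<phi>. bij_betw \<phi> (schroeder n) (avoiders (n + 1) {[1,2,4,3], [2,1,4,3]})
           \<and> (\<forall>\<pi> \<in> schroeder n. \<forall>k \<ge> 1. tau_perm k (\<phi> \<pi>) = tau_path k \<pi>)
           \<and> (\<forall>k \<ge> 2. bij_betw \<phi> {\<pi> \<in> schroeder n. no_cross (int k - 2) \<pi>}
                        (avoiders (n + 1) {[1,2,4,3], [2,1,4,3], [1..<k+1]}))"
proof -
  obtain \<phi> where bij: "bij_betw \<phi> (schroeder n) (perms_1243_2143 (Suc n))"
    and tau: "\<forall>ss\<in>schroeder n. \<forall>k\<ge>1. tau_perm k (\<phi> ss) = tau_path k ss"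
    using schroeder_perms_1243_2143_bij by blast
  have "bij_betw \<phi> {\<pi> \<in> schroeder n. no_cross (int k - 2) \<pi>}
      {t \<in> perms_1243_2143 (Suc n). tau_perm k t = 0}" if "k \<ge> 2" for k
    using bij no_cross_iff_tau_path[OF _ that] tau that by (intro bij_betw_Collect) auto
  then show ?thesis
    unfolding avoiders_eq_perms_1243_2143 avoiders_1243_2143_increasing using bij tau by auto
qed

end
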